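(* Let $d$ be sufficiently large and let $r$ be an even integer with $4\le r\le 2^{-16}d$. For $b\in\{0,1\}$, let $(f,U)\sim\mathcal{D}_b$, and let $B_0$ be the event that $|A[i]-A[j]|\le d/4$ for some distinct $i,j\in[2^{d/64}]$. Then (1) $\Pr_{\mathcal{D}_b}[B_0]\le 2^{-d/32}$ for each $b\in\{0,1\}$; (2) conditioned on $\overline{B_0}$, if $b=0$ then $f$ is Lipschitz, and if $b=1$ then $\ell_{0,U}(f,\mathrm{Lip})\ge\tfrac12$.
   Context: On $\{0,1\}^d$, $|x-y|$ is Hamming distance, $f$ is Lipschitz if $|f(x)-f(y)|\le|x-y|$ for all $x,y$, and $\ell_{0,U}(f,\mathrm{Lip})=\min_{g\text{ Lipschitz}}\Pr_{x\sim U}[f(x)\neq g(x)]$. For $x\in\{0,1\}^d$ and $t>0$, $B(x,t)=\{y:|x-y|<t\}$ (open ball). The distribution $\mathcal{D}_b$ over pairs $(f,U)$ is sampled as follows: (1) sample a list $A$ of $2^{d/64}$ points of $\{0,1\}^d$ independently and uniformly; (2) for each $i\in[2^{d/64}]$ independently choose $A'[i]$ uniformly from $\{y:|A[i]-y|=r-b\}$; (3) define $f(x)=|x-A[i]|$ if $x\in B(A[i],r/2)$ for some $i$; else $f(x)=r-|x-A'[i]|$ if $x\in B(A'[i],r/2)$ for some $i$; else $f(x)=r/2$; (4) let $U$ be the uniform distribution over the set $A\cup A'$ of all these points. *)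

theory Defs
  imports "HOL-Probability.Probability"
begin

definition cube :: "nat \<Rightarrow> bool list set" where
  "cube d = {x. length x = d}"

definition ham :: "bool list \<Rightarrow> bool list \<Rightarrow> nat" where
  "ham x y = card {i. i < length x \<and> x ! i \<noteq> y ! i}"

definition lip :: "nat \<Rightarrow> (bool list \<Rightarrow> real) \<Rightarrow> bool" where
  "lip d g \<longleftrightarrow> (\<forall>x\<in>cube d. \<forall>y\<in>cube d. \<bar>g x - g y\<bar> \<le> real (ham x y))"

text \<open>ell_{0,U}(f,Lip) for U the uniform distribution on the finite set S.\<close>
definition ell0 :: "nat \<Rightarrow> (bool list \<Rightarrow> real) \<Rightarrow> bool list set \<Rightarrow> real" where
  "ell0 d f S = (INF g\<in>{g. lip d g}. measure_pmf.prob (pmf_of_set S) {x. f x \<noteq> g x})"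

definition npts :: "nat \<Rightarrow> nat" where
  "npts d = nat \<lfloor>2 powr (real d / 64)\<rfloor>"

definition Dpairs :: "nat \<Rightarrow> nat \<Rightarrow> nat \<Rightarrow> (bool list list \<times> bool list list) pmf" where
  "Dpairs d r b =
     pmf_of_set {A. length A = npts d \<and> set A \<subseteq> cube d} \<bind>
     (\<lambda>A. map_pmf (\<lambda>A'. (A, A'))
        (pmf_of_set {A'. length A' = npts d \<and> set A' \<subseteq> cube d \<and>
                          (\<forall>i < npts d. ham (A ! i) (A' ! i) = r - b)}))"

text \<open>The function f built from (A, A'); open balls B(x,t) = {y. |x-y| < t}.
  If x lies in several balls, the least index is used (irrelevant off B_0).\<close>
definition hardf :: "nat \<Rightarrow> nat \<Rightarrow> bool list list \<Rightarrow> bool list list \<Rightarrow> bool list \<Rightarrow> real" where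
  "hardf d r A A' x =
     (if \<exists>i < npts d. real (ham x (A ! i)) < real r / 2
      then real (ham x (A ! (LEAST i. i < npts d \<and> real (ham x (A ! i)) < real r / 2)))
      else if \<exists>i < npts d. real (ham x (A' ! i)) < real r / 2
      then real r - real (ham x (A' ! (LEAST i. i < npts d \<and> real (ham x (A' ! i)) < real r / 2)))
      else real r / 2)"

definition B0 :: "nat \<Rightarrow> bool list list \<Rightarrow> bool" where
  "B0 d A \<longleftrightarrow> (\<exists>i < npts d. \<exists>j < npts d. i \<noteq> j \<and> real (ham (A ! i) (A ! j)) \<le> real d / 4)"

end

theory Submission
  imports Defs
begin

text \<open>
  The offset \<open>A[i] xor A[j]\<close> of two independent uniform points is uniform, so they are
  \<open>d/4\<close>-close with probability \<open>#{w. weight w \<le> d/4} / 2^d \<le> 2^(d/4) (3/2)^d / 2^d\<close>,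
  the middle bound coming from \<open>\<Sum>w 2^(-weight w) = (3/2)^d\<close>; a union bound over fewer than
  \<open>2^(d/32)\<close> pairs gives the estimate for \<open>B\<^sub>0\<close>.

  Off \<open>B\<^sub>0\<close> the centres \<open>A[i]\<close> are more than \<open>8r\<close> apart, so open balls of radius
  \<open>r/2\<close> around distinct centres are at distance at least \<open>r\<close> unless they belong to a pair
  \<open>A[i], A'[i]\<close>; since \<open>f\<close> takes values in \<open>[0, r]\<close> and is 1-Lipschitz on each ball and
  across each pair at distance exactly \<open>r\<close>, it is Lipschitz when \<open>b = 0\<close>. When \<open>b = 1\<close>,
  \<open>f\<close> is \<open>0\<close> at \<open>A[i]\<close> and \<open>r\<close> at \<open>A'[i]\<close>, at distance \<open>r - 1\<close>, so every Lipschitz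
  function disagrees with \<open>f\<close> on one point of each of the \<open>n\<close> disjoint pairs, i.e. on at
  least half of the \<open>\<le> 2n\<close> points of the support of \<open>U\<close>.
\<close>

section \<open>Hamming geometry of the cube\<close>

lemma ham_sym: "length x = length y \<Longrightarrow> ham x y = ham y x"
  unfolding ham_def by metis

lemma ham_self [simp]: "ham x x = 0"
  by (simp add: ham_def)

lemma ham_triangle:
  assumes "length x = length y" "length y = length z"
  shows "ham x z \<le> ham x y + ham y z"
proof -
  have "ham x z \<le> card ({i. i < length x \<and> x ! i \<noteq> y ! i} \<union> {i. i < length y \<and> y ! i \<noteq> z ! i})"
    unfolding ham_def using assms by (intro card_mono) auto
  also have "\<dots> \<le> ham x y + ham y z"
    unfolding ham_def by (rule card_Un_le)
  finally show ?thesis .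
qed

lemma finite_cube: "finite (cube d)"
  using finite_lists_length_eq[of "UNIV :: bool set" d] by (simp add: cube_def)

lemma card_cube: "card (cube d) = 2 ^ d"
  using card_lists_length_eq[of "UNIV :: bool set" d] by (simp add: cube_def)

lemma cube_Suc: "cube (Suc d) = (\<lambda>(b, w). b # w) ` (UNIV \<times> cube d)"
  by (auto simp: cube_def length_Suc_conv image_iff)

definition weight :: "bool list \<Rightarrow> nat" where
  "weight w = length (filter id w)"

definition xor_list :: "bool list \<Rightarrow> bool list \<Rightarrow> bool list" where
  "xor_list x w = map (\<lambda>i. x ! i \<noteq> w ! i) [0..<length x]"

lemma length_xor_list [simp]: "length (xor_list x w) = length x"
  by (simp add: xor_list_def)

lemma nth_xor_list [simp]: "i < length x \<Longrightarrow> xor_list x w ! i = (x ! i \<noteq> w ! i)"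
  by (simp add: xor_list_def)

lemma weight_xor_list: "weight (xor_list x y) = ham x y"
  unfolding weight_def ham_def length_filter_conv_card by (simp, intro arg_cong[where f = card]) auto

lemma ham_xor_list: "length w = length x \<Longrightarrow> ham x (xor_list x w) = weight w"
  unfolding weight_def ham_def length_filter_conv_card by (simp, intro arg_cong[where f = card]) auto

lemma xor_list_xor_list: "length w = length x \<Longrightarrow> xor_list x (xor_list x w) = w"
  by (rule nth_equalityI) auto

lemma exists_at_ham_distance:
  assumes "x \<in> cube d" "k \<le> d"
  obtains y where "y \<in> cube d" "ham x y = k"
proof
  let ?w = "replicate k True @ replicate (d - k) False"
  show "xor_list x ?w \<in> cube d" "ham x (xor_list x ?w) = k"
    using assms by (simp_all add: cube_def ham_xor_list weight_def)
qed

lemma sum_power_weight: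
  fixes q :: "'a::comm_semiring_1"
  shows "(\<Sum>w\<in>cube d. q ^ weight w) = (1 + q) ^ d"
proof (induction d)
  case 0
  have "cube 0 = {[]}" by (auto simp: cube_def)
  thus ?case by (simp add: weight_def)
next
  case (Suc d)
  have inj: "inj_on (\<lambda>(b, w). b # w) (UNIV \<times> cube d)"
    by (auto simp: inj_on_def)
  have "(\<Sum>w\<in>cube (Suc d). q ^ weight w) = (\<Sum>(b, w)\<in>UNIV \<times> cube d. q ^ weight (b # w))"
    unfolding cube_Suc by (subst sum.reindex[OF inj]) (simp add: case_prod_unfold)
  also have "\<dots> = (\<Sum>b\<in>UNIV. \<Sum>w\<in>cube d. q ^ weight (b # w))"
    by (rule sum.cartesian_product[symmetric])
  also have "\<dots> = (1 + q) * (\<Sum>w\<in>cube d. q ^ weight w)"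
    by (simp add: UNIV_bool weight_def ring_distribs sum_distrib_left sum.distrib)
  finally show ?case using Suc by simp
qed

text \<open>A Chernoff-type bound: every low-weight word contributes at least \<open>q powr t\<close> to the sum above.\<close>
lemma card_low_weight:
  fixes q t :: real
  assumes "0 < q" "q \<le> 1"
  shows "real (card {w\<in>cube d. real (weight w) \<le> t}) * q powr t \<le> (1 + q) ^ d"
proof -
  let ?W = "{w\<in>cube d. real (weight w) \<le> t}"
  have "real (card ?W) * q powr t = (\<Sum>w\<in>?W. q powr t)"
    by simp
  also have "\<dots> \<le> (\<Sum>w\<in>?W. q ^ weight w)"
    using assms by (intro sum_mono) (auto simp: powr_realpow[symmetric] intro: powr_mono')
  also have "\<dots> \<le> (\<Sum>w\<in>cube d. q ^ weight w)"
    using assms by (intro sum_mono2 finite_cube) auto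
  finally show ?thesis
    by (simp add: sum_power_weight)
qed

section \<open>The bad event \<open>B\<^sub>0\<close>\<close>

abbreviation point_lists :: "nat \<Rightarrow> nat \<Rightarrow> bool list list set" where
  "point_lists n d \<equiv> {A. length A = n \<and> set A \<subseteq> cube d}"

lemma finite_point_lists: "finite (point_lists n d)"
  using finite_lists_length_eq[OF finite_cube, of d n] by (simp add: conj_commute)

lemma point_lists_nonempty: "point_lists n d \<noteq> {}"
proof -
  have "replicate n (replicate d False) \<in> point_lists n d"
    by (auto simp: cube_def)
  thus ?thesis by blast
qed

text \<open>Replacing the \<open>j\<close>-th point by its offset from the \<open>i\<close>-th point decouples the pair.\<close>
lemma card_pair_ham:
  assumes ij: "i < n" "j < n" "i \<noteq> j"
  shows "card {A \<in> point_lists n d. P (ham (A ! i) (A ! j))} * 2 ^ d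
           = card {w \<in> cube d. P (weight w)} * card (point_lists n d)"
proof -
  define S where "S = point_lists n d"
  define E where "E = {A \<in> S. P (ham (A ! i) (A ! j))}"
  define W where "W = {w \<in> cube d. P (weight w)}"
  define h where "h = (\<lambda>(A, y). (xor_list (A ! i) (A ! j), A[j := y]))"
  define k where "k = (\<lambda>(w, B). (B[j := xor_list (B ! i) w], B ! j))"
  have length_nth: "length A = n" "length (A ! l) = d" if "A \<in> S" "l < n" for A l
    using that nth_mem[of l A] by (auto simp: S_def cube_def subset_iff)
  have update: "A[j := y] \<in> S" if "A \<in> S" "y \<in> cube d" for A y
    using that set_update_subset_insert[of A j y] by (auto simp: S_def)
  have "bij_betw h (E \<times> cube d) (W \<times> S)"
  proof (rule bij_betw_byWitness[where f' = k])
    show "\<forall>a\<in>E \<times> cube d. k (h a) = a"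
    proof
      fix a assume "a \<in> E \<times> cube d"
      then obtain A y where "a = (A, y)" "A \<in> S"
        by (auto simp: E_def)
      thus "k (h a) = a"
        using ij length_nth[of A] by (simp add: h_def k_def xor_list_xor_list)
    qed
    show "\<forall>a\<in>W \<times> S. h (k a) = a"
    proof
      fix a assume "a \<in> W \<times> S"
      then obtain w B where "a = (w, B)" "B \<in> S" "length w = d"
        by (auto simp: W_def cube_def)
      thus "h (k a) = a"
        using ij length_nth[of B] by (simp add: h_def k_def xor_list_xor_list)
    qed
    show "h ` (E \<times> cube d) \<subseteq> W \<times> S"
    proof (rule image_subsetI)
      fix a assume "a \<in> E \<times> cube d"
      then obtain A y where "a = (A, y)" "A \<in> E" "y \<in> cube d"
        by auto
      thus "h a \<in> W \<times> S"
        using ij length_nth[of A] update[of A y]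
        by (simp add: E_def W_def h_def weight_xor_list cube_def)
    qed
    show "k ` (W \<times> S) \<subseteq> E \<times> cube d"
    proof (rule image_subsetI)
      fix a assume "a \<in> W \<times> S"
      then obtain w B where "a = (w, B)" "w \<in> W" "B \<in> S"
        by auto
      moreover have "xor_list (B ! i) w \<in> cube d"
        using ij length_nth[OF \<open>B \<in> S\<close>] by (simp add: cube_def)
      ultimately show "k a \<in> E \<times> cube d"
        using ij length_nth[of B] update[of B]
        by (simp add: E_def W_def k_def cube_def ham_xor_list)
    qed
  qed
  hence "card (E \<times> cube d) = card (W \<times> S)"
    by (rule bij_betw_same_card)
  thus ?thesis
    by (simp add: card_cartesian_product card_cube E_def S_def W_def)
qed

lemma prob_pair_ham:
  assumes "i < n" "j < n" "i \<noteq> j"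
  shows "measure_pmf.prob (pmf_of_set (point_lists n d)) {A. P (ham (A ! i) (A ! j))}
           = real (card {w \<in> cube d. P (weight w)}) / 2 ^ d"
proof -
  let ?S = "point_lists n d"
  have "real (card (?S \<inter> {A. P (ham (A ! i) (A ! j))})) * 2 ^ d
          = real (card {w \<in> cube d. P (weight w)}) * real (card ?S)"
    using arg_cong[OF card_pair_ham[OF assms, where P = P and d = d], of real] by (simp add: Int_def)
  moreover have "card ?S > 0"
    using finite_point_lists point_lists_nonempty by (simp add: card_gt_0_iff)
  ultimately show ?thesis
    by (simp add: measure_pmf_of_set[OF point_lists_nonempty finite_point_lists] field_simps)
qed

lemma prob_B0_le_low_weight_count:
  "measure_pmf.prob (pmf_of_set (point_lists (npts d) d)) {A. B0 d A}
     \<le> real (npts d) ^ 2 * real (card {w \<in> cube d. real (weight w) \<le> real d / 4}) / 2 ^ d"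
proof -
  let ?M = "pmf_of_set (point_lists (npts d) d)"
  let ?I = "{(i, j). i < npts d \<and> j < npts d \<and> i \<noteq> j}"
  let ?close = "\<lambda>(i, j). {A. real (ham (A ! i) (A ! j)) \<le> real d / 4}"
  let ?p = "real (card {w \<in> cube d. real (weight w) \<le> real d / 4}) / 2 ^ d"
  have fin: "finite ?I"
    by (rule finite_subset[of _ "{..<npts d} \<times> {..<npts d}"]) auto
  have "measure_pmf.prob ?M {A. B0 d A} \<le> measure_pmf.prob ?M (\<Union> (?close ` ?I))"
    by (intro measure_pmf.finite_measure_mono) (auto simp: B0_def)
  also have "\<dots> \<le> (\<Sum>ij\<in>?I. measure_pmf.prob ?M (?close ij))"
    by (intro measure_pmf.finite_measure_subadditive_finite fin) auto
  also have "\<dots> = (\<Sum>ij\<in>?I. ?p)"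
  proof (rule sum.cong[OF refl])
    fix ij assume "ij \<in> ?I"
    thus "measure_pmf.prob ?M (?close ij) = ?p"
      using prob_pair_ham[where P = "\<lambda>k. real k \<le> real d / 4", of "fst ij" "npts d" "snd ij"]
      by (auto simp: case_prod_unfold)
  qed
  also have "\<dots> = real (card ?I) * ?p"
    by simp
  also have "\<dots> \<le> real (npts d) ^ 2 * ?p"
  proof (intro mult_right_mono)
    have "card ?I \<le> card ({..<npts d} \<times> {..<npts d})"
      by (intro card_mono) auto
    thus "real (card ?I) \<le> real (npts d) ^ 2"
      by (simp add: card_cartesian_product power2_eq_square flip: of_nat_mult)
  qed simp
  finally show ?thesis by simp
qed

lemma npts_squared_le: "real (npts d) ^ 2 \<le> 2 powr (real d / 32)"
proof -
  have "real (npts d) \<le> 2 powr (real d / 64)"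
    unfolding npts_def by (simp add: of_nat_nat)
  hence "real (npts d) ^ 2 \<le> (2 powr (real d / 64)) ^ 2"
    by (intro power_mono) auto
  thus ?thesis
    by (simp add: power2_eq_square flip: powr_add)
qed

lemma three_quarters_power_le: "(3 / 4 :: real) ^ d \<le> 2 powr (- (5 * real d / 16))"
proof -
  have "(3 / 4 :: real) ^ d = (3 / 4) powr real d"
    by (simp add: powr_realpow)
  also have "\<dots> = ((3 / 4) powr 16) powr (real d / 16)"
    unfolding powr_powr by simp
  also have "\<dots> \<le> (2 powr (-5)) powr (real d / 16)"
  proof (intro powr_mono2)
    show "(3 / 4 :: real) powr 16 \<le> 2 powr (-5)"
      by (simp add: powr_minus powr_numeral power_divide)
  qed auto
  also have "\<dots> = 2 powr (- (5 * real d / 16))"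
    by (simp add: powr_powr)
  finally show ?thesis .
qed

lemma prob_B0_le:
  "measure_pmf.prob (pmf_of_set (point_lists (npts d) d)) {A. B0 d A} \<le> 2 powr (- (real d / 32))"
proof -
  let ?W = "{w \<in> cube d. real (weight w) \<le> real d / 4}"
  have "real (card ?W) * (1 / 2) powr (real d / 4) \<le> (3 / 2) ^ d"
    using card_low_weight[of "1 / 2" d "real d / 4"] by simp
  hence W: "real (card ?W) \<le> 2 powr (real d / 4) * (3 / 2) ^ d"
    by (simp add: powr_divide field_simps)
  have "measure_pmf.prob (pmf_of_set (point_lists (npts d) d)) {A. B0 d A}
          \<le> real (npts d) ^ 2 * real (card ?W) / 2 ^ d"
    by (rule prob_B0_le_low_weight_count)
  also have "\<dots> \<le> 2 powr (real d / 32) * (2 powr (real d / 4) * (3 / 2) ^ d) / 2 ^ d"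
    by (intro divide_right_mono mult_mono npts_squared_le W) auto
  also have "\<dots> = 2 powr (real d / 32) * 2 powr (real d / 4) * ((3 / 2) ^ d / 2 ^ d)"
    by simp
  also have "\<dots> = 2 powr (real d / 32 + real d / 4) * (3 / 4) ^ d"
    by (simp only: powr_add power_divide flip: power_mult_distrib) (simp flip: power_mult_distrib)
  also have "\<dots> \<le> 2 powr (real d / 32 + real d / 4) * 2 powr (- (5 * real d / 16))"
    by (intro mult_left_mono three_quarters_power_le) auto
  also have "\<dots> = 2 powr (- (real d / 32))"
    by (simp flip: powr_add)
  finally show ?thesis .
qed

lemma npts_pos: "0 < npts d"
proof -
  have "(1::real) \<le> 2 powr (real d / 64)"
    by (rule ge_one_powr_ge_zero) auto
  thus ?thesis
    unfolding npts_def by linarith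
qed

lemma map_fst_Dpairs: "map_pmf fst (Dpairs d r b) = pmf_of_set (point_lists (npts d) d)"
  unfolding Dpairs_def map_bind_pmf by (simp add: map_pmf_comp comp_def bind_return_pmf')

lemma set_pmf_Dpairs:
  assumes "r - b \<le> d" "p \<in> set_pmf (Dpairs d r b)"
  shows "fst p \<in> point_lists (npts d) d" "snd p \<in> point_lists (npts d) d"
    "\<And>i. i < npts d \<Longrightarrow> ham (fst p ! i) (snd p ! i) = r - b"
proof -
  define S' where "S' A = {A' \<in> point_lists (npts d) d. \<forall>i < npts d. ham (A ! i) (A' ! i) = r - b}" for A
  have "S' A \<noteq> {}" if A: "A \<in> point_lists (npts d) d" for A
  proof -
    have "\<exists>y \<in> cube d. ham (A ! i) y = r - b" if "i < npts d" for i
      using A that assms(1) exists_at_ham_distance[of "A ! i" d "r - b"] by (auto simp: subset_iff)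
    then obtain y where "\<forall>i < npts d. y i \<in> cube d \<and> ham (A ! i) (y i) = r - b"
      by metis
    hence "map y [0..<npts d] \<in> S' A"
      by (auto simp: S'_def)
    thus ?thesis by blast
  qed
  moreover have "finite (S' A)" for A
    by (rule finite_subset[OF _ finite_point_lists]) (auto simp: S'_def)
  moreover have "Dpairs d r b = pmf_of_set (point_lists (npts d) d) \<bind> (\<lambda>A. map_pmf (Pair A) (pmf_of_set (S' A)))"
    unfolding Dpairs_def S'_def by (simp add: conj_assoc)
  ultimately obtain A A' where "A \<in> point_lists (npts d) d" "A' \<in> S' A" "p = (A, A')"
    using assms(2) point_lists_nonempty finite_point_lists by auto
  thus "fst p \<in> point_lists (npts d) d" "snd p \<in> point_lists (npts d) d"
    "\<And>i. i < npts d \<Longrightarrow> ham (fst p ! i) (snd p ! i) = r - b"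
    by (auto simp: S'_def)
qed

section \<open>The hard functions\<close>

abbreviation hdist :: "bool list \<Rightarrow> bool list \<Rightarrow> real" where
  "hdist x y \<equiv> real (ham x y)"

lemma hdist_sym: "x \<in> cube d \<Longrightarrow> y \<in> cube d \<Longrightarrow> hdist x y = hdist y x"
  using ham_sym by (simp add: cube_def)

lemma hdist_triangle: "x \<in> cube d \<Longrightarrow> y \<in> cube d \<Longrightarrow> z \<in> cube d \<Longrightarrow> hdist x z \<le> hdist x y + hdist y z"
  using ham_triangle[of x y z] by (simp add: cube_def)

lemma far_from_far_centres:
  assumes "x \<in> cube d" "y \<in> cube d" "c \<in> cube d" "c' \<in> cube d"
    and "hdist x c < t" "hdist y c' < t" "4 * t \<le> hdist c c'"
  shows "2 * t \<le> hdist x y"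
  using hdist_triangle[of c d x c'] hdist_triangle[of x d y c'] hdist_sym[of c d x] assms by linarith

lemma lipI:
  assumes "\<And>x y. x \<in> cube d \<Longrightarrow> y \<in> cube d \<Longrightarrow> g x - g y \<le> hdist x y"
  shows "lip d g"
  unfolding lip_def using assms hdist_sym by (metis abs_le_iff minus_diff_eq)

lemma half_le_prob_hitting_pairs:
  fixes a a' :: "nat \<Rightarrow> 'a"
  assumes "0 < n"
    and disjoint: "\<And>i j. i < n \<Longrightarrow> j < n \<Longrightarrow> i \<noteq> j \<Longrightarrow> {a i, a' i} \<inter> {a j, a' j} = {}"
    and hit: "\<And>i. i < n \<Longrightarrow> a i \<in> S \<or> a' i \<in> S"
  shows "1 / 2 \<le> measure_pmf.prob (pmf_of_set (a ` {..<n} \<union> a' ` {..<n})) S"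
proof -
  let ?U = "a ` {..<n} \<union> a' ` {..<n}"
  define p where "p i = (if a i \<in> S then a i else a' i)" for i
  have "inj_on p {..<n}"
    using disjoint by (intro inj_onI) (auto simp: p_def split: if_splits)
  hence "n = card (p ` {..<n})"
    by (simp add: card_image)
  also have "\<dots> \<le> card (?U \<inter> S)"
    using hit by (intro card_mono) (auto simp: p_def)
  finally have hits: "n \<le> card (?U \<inter> S)" .
  have "card ?U \<le> card (a ` {..<n}) + card (a' ` {..<n})"
    by (rule card_Un_le)
  also have "\<dots> \<le> 2 * n"
    using card_image_le[of "{..<n}" a] card_image_le[of "{..<n}" a'] by simp
  finally have "card ?U \<le> 2 * card (?U \<inter> S)"
    using hits by linarith
  moreover have "?U \<noteq> {}"
    using \<open>0 < n\<close> by auto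
  ultimately show ?thesis
    by (simp add: measure_pmf_of_set card_gt_0_iff field_simps flip: of_nat_mult)
qed

text \<open>What is left of \<open>\<D>\<^sub>b\<close> off \<open>B\<^sub>0\<close>; a separation of \<open>4r\<close> between centres suffices.\<close>
locale separated_centres =
  fixes d r :: nat and A A' :: "bool list list"
  assumes A_points: "A \<in> point_lists (npts d) d"
    and A'_points: "A' \<in> point_lists (npts d) d"
    and partner_close: "\<And>i. i < npts d \<Longrightarrow> ham (A ! i) (A' ! i) \<le> r"
    and centres_separated: "\<And>i j. i < npts d \<Longrightarrow> j < npts d \<Longrightarrow> i \<noteq> j \<Longrightarrow> 4 * r \<le> ham (A ! i) (A ! j)"
begin

abbreviation "n \<equiv> npts d"
abbreviation "f \<equiv> hardf d r A A'"

lemma A_in_cube: "i < n \<Longrightarrow> A ! i \<in> cube d"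
  using A_points nth_mem[of i A] by auto

lemma A'_in_cube: "i < n \<Longrightarrow> A' ! i \<in> cube d"
  using A'_points nth_mem[of i A'] by auto

lemma centres_far:
  assumes "k < n" "l < n" "k \<noteq> l" "c \<in> {A ! k, A' ! k}" "c' \<in> {A ! l, A' ! l}"
  shows "2 * real r \<le> hdist c c'"
proof -
  have "4 * real r \<le> hdist (A ! k) (A ! l)"
    using centres_separated[OF assms(1-3)] by linarith
  moreover have "hdist (A ! k) (A ! l) \<le> hdist (A ! k) c + hdist c c' + hdist c' (A ! l)"
    using assms hdist_triangle[of "A ! k" d c "A ! l"] hdist_triangle[of c d c' "A ! l"]
      A_in_cube A'_in_cube by auto
  moreover have "hdist (A ! k) c \<le> r" "hdist c' (A ! l) \<le> r"
    using assms partner_close[of k] partner_close[of l] hdist_sym[of "A' ! l" d "A ! l"]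
      A_in_cube A'_in_cube by auto
  ultimately show ?thesis by linarith
qed

lemma points_in_distinct_balls_far:
  assumes "k < n" "l < n" "k \<noteq> l" "c \<in> {A ! k, A' ! k}" "c' \<in> {A ! l, A' ! l}"
    and "x \<in> cube d" "y \<in> cube d" "hdist x c < real r / 2" "hdist y c' < real r / 2"
  shows "real r \<le> hdist x y"
  using far_from_far_centres[of x d y c c' "real r / 2"] centres_far[OF assms(1-5)] assms
    A_in_cube A'_in_cube by auto

lemma hardf_cases:
  obtains (A_ball) k where "k < n" "hdist x (A ! k) < real r / 2" "f x = hdist x (A ! k)"
  | (A'_ball) k where "\<forall>i<n. real r / 2 \<le> hdist x (A ! i)" "k < n"
      "hdist x (A' ! k) < real r / 2" "f x = real r - hdist x (A' ! k)"
  | (outside) "\<forall>i<n. real r / 2 \<le> hdist x (A ! i)" "\<forall>i<n. real r / 2 \<le> hdist x (A' ! i)"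
      "f x = real r / 2"
proof (cases "\<exists>i<n. hdist x (A ! i) < real r / 2")
  case True
  let ?k = "LEAST i. i < n \<and> hdist x (A ! i) < real r / 2"
  have "?k < n \<and> hdist x (A ! ?k) < real r / 2"
    using LeastI_ex[of "\<lambda>i. i < n \<and> hdist x (A ! i) < real r / 2"] True by blast
  moreover have "f x = hdist x (A ! ?k)"
    using True unfolding hardf_def by simp
  ultimately show ?thesis
    using A_ball by blast
next
  case far_A: False
  hence outside_A: "\<forall>i<n. real r / 2 \<le> hdist x (A ! i)"
    using not_less by blast
  show ?thesis
  proof (cases "\<exists>i<n. hdist x (A' ! i) < real r / 2")
    case True
    let ?k = "LEAST i. i < n \<and> hdist x (A' ! i) < real r / 2"
    have "?k < n \<and> hdist x (A' ! ?k) < real r / 2"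
      using LeastI_ex[of "\<lambda>i. i < n \<and> hdist x (A' ! i) < real r / 2"] True by blast
    moreover have "f x = real r - hdist x (A' ! ?k)"
      unfolding hardf_def if_not_P[OF far_A] if_P[OF True] ..
    ultimately show ?thesis
      using A'_ball[OF outside_A] by blast
  next
    case False
    have "f x = real r / 2"
      unfolding hardf_def if_not_P[OF far_A] if_not_P[OF False] ..
    moreover have "\<forall>i<n. real r / 2 \<le> hdist x (A' ! i)"
      using False not_less by blast
    ultimately show ?thesis
      using outside[OF outside_A] by blast
  qed
qed

lemma hardf_diff_le:
  assumes partner_eq: "\<And>i. i < n \<Longrightarrow> ham (A ! i) (A' ! i) = r"
    and x: "x \<in> cube d" and y: "y \<in> cube d"
  shows "f x - f y \<le> hdist x y"
proof -
  have tri: "hdist u w \<le> hdist u v + hdist v w" if "u \<in> cube d" "v \<in> cube d" "w \<in> cube d" for u v w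
    using that by (rule hdist_triangle)
  have sym: "hdist x y = hdist y x"
    using x y by (rule hdist_sym)
  have far: "real r \<le> hdist x y"
    if "k < n" "l < n" "k \<noteq> l" "c \<in> {A ! k, A' ! k}" "c' \<in> {A ! l, A' ! l}"
      "hdist x c < real r / 2" "hdist y c' < real r / 2" for k l c c'
    using points_in_distinct_balls_far[OF that(1-5) x y that(6,7)] .
  have nonneg: "0 \<le> hdist u v" for u v
    by simp
  show ?thesis
  proof (cases x rule: hardf_cases)
    case x_ball: (A_ball k)
    show ?thesis
    proof (cases y rule: hardf_cases)
      case y_ball: (A_ball l)
      show ?thesis
      proof (cases "k = l")
        case True
        thus ?thesis
          using x_ball y_ball tri[OF x y A_in_cube[of k]] by simp
      next
        case False
        thus ?thesis
          using x_ball y_ball far[of k l "A ! k" "A ! l"] nonneg[of y] by auto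
      qed
    qed (use x_ball in linarith)+
  next
    case x_ball: (A'_ball k)
    show ?thesis
    proof (cases y rule: hardf_cases)
      case y_ball: (A_ball l)
      show ?thesis
      proof (cases "k = l")
        case True
        have "real r \<le> hdist (A ! k) y + hdist y x + hdist x (A' ! k)"
          using partner_eq[of k] tri[OF A_in_cube[of k] y A'_in_cube[of k]] tri[OF y x A'_in_cube[of k]] x_ball
          by fastforce
        thus ?thesis
          using x_ball y_ball True sym hdist_sym[OF A_in_cube[of k] y] by simp
      next
        case False
        thus ?thesis
          using x_ball y_ball far[of k l "A' ! k" "A ! l"] nonneg[of x] nonneg[of y] by auto
      qed
    next
      case y_ball: (A'_ball l)
      show ?thesis
      proof (cases "k = l")
        case True
        thus ?thesis
          using x_ball y_ball tri[OF y x A'_in_cube[of k]] sym by simp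
      next
        case False
        thus ?thesis
          using x_ball y_ball far[of k l "A' ! k" "A' ! l"] nonneg[of x] by auto
      qed
    next
      case y_outside: outside
      thus ?thesis
        using x_ball y_outside(2) tri[OF y x A'_in_cube[of k]] sym by auto
    qed
  next
    case x_outside: outside
    show ?thesis
    proof (cases y rule: hardf_cases)
      case y_ball: (A_ball l)
      thus ?thesis
        using x_outside(1,3) y_ball tri[OF x y A_in_cube[of l]] by auto
    qed (use x_outside in linarith)+
  qed
qed

lemma lip_hardf:
  assumes "\<And>i. i < n \<Longrightarrow> ham (A ! i) (A' ! i) = r"
  shows "lip d f"
  using hardf_diff_le[OF assms] by (rule lipI)

lemma hardf_at_A:
  assumes "i < n" "0 < r"
  shows "f (A ! i) = 0"
proof (cases "A ! i" rule: hardf_cases)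
  case (A_ball k)
  thus ?thesis
    using centres_far[of i k "A ! i" "A ! k"] assms by (cases "k = i") auto
qed (use assms in auto)

lemma hardf_at_A':
  assumes i: "i < n" and half: "r \<le> 2 * ham (A ! i) (A' ! i)"
  shows "f (A' ! i) = r"
proof (cases "A' ! i" rule: hardf_cases)
  case (A_ball k)
  have "hdist (A' ! i) (A ! k) = hdist (A ! k) (A' ! i)"
    using hdist_sym A'_in_cube[OF i] A_in_cube[OF A_ball(1)] by blast
  thus ?thesis
    using A_ball centres_far[of k i "A ! k" "A' ! i"] i half by (cases "k = i") auto
next
  case (A'_ball k)
  thus ?thesis
    using centres_far[of i k "A' ! i" "A' ! k"] i by (cases "k = i") auto
qed (use i in auto)

text \<open>A Lipschitz function cannot climb from \<open>0\<close> to \<open>r\<close> over a distance less than \<open>r\<close>.\<close>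
lemma lip_disagrees_at_pair:
  assumes "lip d g" "i < n" "r \<le> 2 * ham (A ! i) (A' ! i)" "ham (A ! i) (A' ! i) < r"
  shows "f (A ! i) \<noteq> g (A ! i) \<or> f (A' ! i) \<noteq> g (A' ! i)"
  using assms hardf_at_A hardf_at_A' A_in_cube A'_in_cube unfolding lip_def by fastforce

lemma ell0_hardf_ge_half:
  assumes "\<And>i. i < n \<Longrightarrow> r \<le> 2 * ham (A ! i) (A' ! i)"
    and "\<And>i. i < n \<Longrightarrow> ham (A ! i) (A' ! i) < r"
  shows "1 / 2 \<le> ell0 d f (set A \<union> set A')"
  unfolding ell0_def
proof (rule cINF_greatest)
  show "{g. lip d g} \<noteq> {}"
    using lipI[of d "\<lambda>_. 0"] by auto
next
  fix g assume "g \<in> {g. lip d g}"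
  have "0 < r"
    using assms(2)[OF npts_pos] by simp
  have "{A ! i, A' ! i} \<inter> {A ! j, A' ! j} = {}" if "i < n" "j < n" "i \<noteq> j" for i j
    using that \<open>0 < r\<close> centres_far[of i j] by fastforce
  hence "1 / 2 \<le> measure_pmf.prob (pmf_of_set ((!) A ` {..<n} \<union> (!) A' ` {..<n})) {x. f x \<noteq> g x}"
    using lip_disagrees_at_pair \<open>g \<in> {g. lip d g}\<close> assms
    by (intro half_le_prob_hitting_pairs[OF npts_pos]) auto
  moreover have "set A \<union> set A' = (!) A ` {..<n} \<union> (!) A' ` {..<n}"
    using A_points A'_points by (auto simp: in_set_conv_nth)
  ultimately show "1 / 2 \<le> measure_pmf.prob (pmf_of_set (set A \<union> set A')) {x. f x \<noteq> g x}"
    by simp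
qed

end

lemma separated_centres_Dpairs:
  assumes "p \<in> set_pmf (Dpairs d r b)" "\<not> B0 d (fst p)" "16 * r \<le> d"
  shows "separated_centres d r (fst p) (snd p)"
proof
  show "fst p \<in> point_lists (npts d) d" "snd p \<in> point_lists (npts d) d"
    and "\<And>i. i < npts d \<Longrightarrow> ham (fst p ! i) (snd p ! i) \<le> r"
    using set_pmf_Dpairs[OF _ assms(1)] assms(3) by auto
  show "4 * r \<le> ham (fst p ! i) (fst p ! j)" if "i < npts d" "j < npts d" "i \<noteq> j" for i j
    using assms(2,3) that unfolding B0_def by fastforce
qed

theorem lemma4p5:
  shows "\<exists>d0::nat. \<forall>d \<ge> d0. \<forall>(r::nat) (b::nat).
           even r \<and> 4 \<le> r \<and> real r \<le> 2 powr (-16) * real d \<and> b \<le> 1 \<longrightarrow>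
           measure_pmf.prob (Dpairs d r b) {p. B0 d (fst p)} \<le> 2 powr (- (real d / 32)) \<and>
           (\<forall>p \<in> set_pmf (Dpairs d r b). \<not> B0 d (fst p) \<longrightarrow>
              (b = 0 \<longrightarrow> lip d (hardf d r (fst p) (snd p))) \<and>
              (b = 1 \<longrightarrow> ell0 d (hardf d r (fst p) (snd p)) (set (fst p) \<union> set (snd p)) \<ge> 1 / 2))"
proof (intro exI[of _ 0] allI impI conjI ballI)
  fix d r b :: nat
  assume "even r \<and> 4 \<le> r \<and> real r \<le> 2 powr (-16) * real d \<and> b \<le> 1"
  hence r: "4 \<le> r" "16 * r \<le> d"
    by (auto simp: powr_minus powr_numeral)
  have "measure_pmf.prob (Dpairs d r b) {p. B0 d (fst p)}
          = measure_pmf.prob (map_pmf fst (Dpairs d r b)) {A. B0 d A}"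
    by (simp add: vimage_def)
  thus "measure_pmf.prob (Dpairs d r b) {p. B0 d (fst p)} \<le> 2 powr (- (real d / 32))"
    using prob_B0_le[of d] by (simp add: map_fst_Dpairs)
  fix p assume p: "p \<in> set_pmf (Dpairs d r b)" and "\<not> B0 d (fst p)"
  then interpret separated_centres d r "fst p" "snd p"
    using r(2) by (rule separated_centres_Dpairs)
  have partner: "ham (fst p ! i) (snd p ! i) = r - b" if "i < npts d" for i
    using set_pmf_Dpairs[OF _ p] that r by auto
  show "b = 0 \<Longrightarrow> lip d f"
    using partner by (intro lip_hardf) simp
  show "b = 1 \<Longrightarrow> 1 / 2 \<le> ell0 d f (set (fst p) \<union> set (snd p))"
    using partner r by (intro ell0_hardf_ge_half) auto
qed

end
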